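(* Let $d$ and $k$ be integers with $2\le k\le d-2$ and let $\varepsilon\in(0,1)$. Set $r=\lceil k(d-k+1)/\varepsilon\rceil$. Then there is a positive integer $p_0=p_0(d,\varepsilon,k)$ such that for every prime $p\ge p_0$ there exists a subset $R\subseteq\mathbb{F}_p^{d-1}$ with $|R|\ge p^{d-k-\varepsilon}/2$ such that every $(k-1)$-dimensional affine subspace of $\mathbb{F}_p^{d-1}$ contains at most $r-1$ points of $R$.
   Context: $\mathbb{F}_p$ denotes the finite field with $p$ elements, and $\mathbb{F}_p^{d-1}$ the $(d-1)$-dimensional vector space over it; a $(k-1)$-dimensional affine subspace is a translate $x+L$ of a $(k-1)$-dimensional linear subspace $L$. *)

theory Defs
  imports Complex_Main "HOL-Computational_Algebra.Primes"
begin

text \<open>Vectors of F_p^n are represented as functions nat => nat with entries in {0..<p}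
  at coordinates i < n and 0 elsewhere (F_p = residues 0..p-1).\<close>

definition Fvec :: "nat \<Rightarrow> nat \<Rightarrow> (nat \<Rightarrow> nat) set" where
  "Fvec p n = {v. (\<forall>i<n. v i < p) \<and> (\<forall>i\<ge>n. v i = 0)}"

definition vadd :: "nat \<Rightarrow> nat \<Rightarrow> (nat \<Rightarrow> nat) \<Rightarrow> (nat \<Rightarrow> nat) \<Rightarrow> (nat \<Rightarrow> nat)" where
  "vadd p n u w = (\<lambda>i. if i < n then (u i + w i) mod p else 0)"

definition lincomb :: "nat \<Rightarrow> nat \<Rightarrow> (nat \<Rightarrow> nat) \<Rightarrow> (nat \<Rightarrow> nat \<Rightarrow> nat) \<Rightarrow> nat \<Rightarrow> (nat \<Rightarrow> nat)" where
  "lincomb p n t vs m = (\<lambda>i. if i < n then (\<Sum>j<m. t j * vs j i) mod p else 0)"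

definition lin_indep :: "nat \<Rightarrow> nat \<Rightarrow> (nat \<Rightarrow> nat \<Rightarrow> nat) \<Rightarrow> nat \<Rightarrow> bool" where
  "lin_indep p n vs m =
     (\<forall>t \<in> Fvec p m. lincomb p n t vs m = (\<lambda>_. 0) \<longrightarrow> (\<forall>j<m. t j = 0))"

definition affine_subspace :: "nat \<Rightarrow> nat \<Rightarrow> nat \<Rightarrow> (nat \<Rightarrow> nat) set \<Rightarrow> bool" where
  "affine_subspace p n m A =
     (\<exists>x \<in> Fvec p n. \<exists>vs. (\<forall>j<m. vs j \<in> Fvec p n) \<and> lin_indep p n vs m \<and>
        A = {vadd p n x (lincomb p n t vs m) | t. t \<in> Fvec p m})"

end

theory Submission
  imports Defs "HOL-Number_Theory.Cong" "HOL-Library.FuncSet"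
begin

text \<open>If \<open>r\<close> points of \<open>F_p^n\<close> lie in an \<open>m\<close>-flat, pick one of them, \<open>y0\<close>, and greedily further
  points \<open>y0 + w\<^sub>1, \<dots>, y0 + w\<^sub>j\<close> with linearly independent \<open>w\<^sub>i\<close> until the \<open>j\<close>-flat they
  span contains all \<open>r\<close> points; then \<open>j \<le> m\<close>, and the remaining \<open>r - j - 1\<close> points lie in a set
  of \<open>p\<^sup>j\<close> elements. Hence at most \<open>(m + 1) p\<^bsup>n + nm + m(r-m-1)\<^esup>\<close> \<open>r\<close>-sets are degenerate
  (contained in an \<open>m\<close>-flat). A degenerate \<open>r\<close>-set lies in a \<open>C(s,r)/C(p\<^sup>n,r)\<close> fraction
  of the \<open>s\<close>-subsets of \<open>F_p^n\<close>; for \<open>s \<approx> p\<^bsup>n-m-\<epsilon>\<^esup>/2\<close> and \<open>(m+1)(n-m+1) \<le> \<epsilon> r\<close> the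
  degenerate sets cover only a fraction \<open>(m + 1) r\<^sup>r / p < 1\<close> of them, so some \<open>s\<close>-subset contains
  no degenerate \<open>r\<close>-set, i.e. meets every \<open>m\<close>-flat in fewer than \<open>r\<close> points. The theorem is the
  case \<open>n = d - 1\<close>, \<open>m = k - 1\<close>.\<close>

lemma card_funs_fixed_outside:
  assumes "finite X"
  shows "finite {f. (\<forall>i<n. f i \<in> X) \<and> (\<forall>i\<ge>n. f i = z)}"
    and "card {f. (\<forall>i<n. f i \<in> X) \<and> (\<forall>i\<ge>n. f i = z)} = card X ^ n"
proof -
  let ?ext = "\<lambda>f i. if i < n then f i else z"
  have eq: "{f. (\<forall>i<n. f i \<in> X) \<and> (\<forall>i\<ge>n. f i = z)} = ?ext ` ({..<n} \<rightarrow>\<^sub>E X)"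
  proof (intro equalityI subsetI)
    fix f assume f: "f \<in> {f. (\<forall>i<n. f i \<in> X) \<and> (\<forall>i\<ge>n. f i = z)}"
    have "restrict f {..<n} \<in> {..<n} \<rightarrow>\<^sub>E X" using f by (simp add: restrict_PiE_iff)
    moreover have "f = ?ext (restrict f {..<n})" using f by (auto simp: fun_eq_iff)
    ultimately show "f \<in> ?ext ` ({..<n} \<rightarrow>\<^sub>E X)" by blast
  qed (auto simp: PiE_def Pi_def)
  have "inj_on ?ext ({..<n} \<rightarrow>\<^sub>E X)"
    by (rule inj_onI) (metis (mono_tags, lifting) PiE_ext lessThan_iff)
  then show "finite {f. (\<forall>i<n. f i \<in> X) \<and> (\<forall>i\<ge>n. f i = z)}"
    and "card {f. (\<forall>i<n. f i \<in> X) \<and> (\<forall>i\<ge>n. f i = z)} = card X ^ n"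
    unfolding eq using assms by (simp_all add: finite_PiE card_image card_PiE)
qed

lemma finite_Fvec: "finite (Fvec p n)"
  and card_Fvec: "card (Fvec p n) = p ^ n"
  using card_funs_fixed_outside[of "{..<p}" n 0] by (simp_all add: Fvec_def)

lemma Fvec_eqI:
  assumes "u \<in> Fvec p n" "w \<in> Fvec p n" "\<forall>i<n. int (u i) mod int p = int (w i) mod int p"
  shows "u = w"
proof
  fix i show "u i = w i"
  proof (cases "i < n")
    case True
    then have "u i < p" "w i < p" using assms by (auto simp: Fvec_def)
    then show ?thesis using assms(3) True
      by (metis of_nat_eq_iff zmod_int mod_less)
  next
    case False then show ?thesis using assms by (auto simp: Fvec_def)
  qed
qed

lemma zero_in_Fvec: "0 < p \<Longrightarrow> (\<lambda>_. 0) \<in> Fvec p n"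
  by (simp add: Fvec_def)

lemma lincomb_in_Fvec: "0 < p \<Longrightarrow> lincomb p n t vs m \<in> Fvec p n"
  by (auto simp: Fvec_def lincomb_def)

lemma vadd_in_Fvec: "0 < p \<Longrightarrow> vadd p n u w \<in> Fvec p n"
  by (auto simp: Fvec_def vadd_def)

lemma int_lincomb:
  "i < n \<Longrightarrow> int (lincomb p n t vs m i) = (\<Sum>j<m. int (t j) * int (vs j i)) mod int p"
  by (simp add: lincomb_def zmod_int)

lemma int_vadd: "i < n \<Longrightarrow> int (vadd p n u w i) = (int (u i) + int (w i)) mod int p"
  by (simp add: vadd_def zmod_int)

lemma vadd_zero_right: "y \<in> Fvec p n \<Longrightarrow> vadd p n y (\<lambda>_. 0) = y"
  by (auto simp: vadd_def Fvec_def fun_eq_iff)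

lemma vadd_left_cancel:
  assumes "w \<in> Fvec p n" "w' \<in> Fvec p n" "vadd p n y w = vadd p n y w'"
  shows "w = w'"
proof (rule Fvec_eqI[OF assms(1,2)], intro allI impI)
  fix i assume i: "i < n"
  have "[int (y i) + int (w i) = int (y i) + int (w' i)] (mod int p)"
    using int_vadd[OF i, of p y w] int_vadd[OF i, of p y w'] assms(3) by (simp add: cong_def)
  then show "int (w i) mod int p = int (w' i) mod int p"
    unfolding cong_add_lcancel by (simp add: cong_def)
qed

definition vsub :: "nat \<Rightarrow> nat \<Rightarrow> (nat \<Rightarrow> nat) \<Rightarrow> (nat \<Rightarrow> nat) \<Rightarrow> (nat \<Rightarrow> nat)" where
  "vsub p n y z = (\<lambda>i. if i < n then nat ((int (y i) - int (z i)) mod int p) else 0)"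

lemma vsub_in_Fvec: "0 < p \<Longrightarrow> vsub p n y z \<in> Fvec p n"
  by (auto simp: vsub_def Fvec_def nat_less_iff)

lemma int_vsub: "0 < p \<Longrightarrow> i < n \<Longrightarrow> int (vsub p n y z i) = (int (y i) - int (z i)) mod int p"
  by (simp add: vsub_def)

lemma vadd_vsub:
  assumes p: "0 < p" and "y \<in> Fvec p n"
  shows "vadd p n z (vsub p n y z) = y"
proof (rule Fvec_eqI[OF vadd_in_Fvec[OF p] assms(2)], intro allI impI)
  fix i assume i: "i < n"
  have "int (vadd p n z (vsub p n y z) i) = (int (z i) + (int (y i) - int (z i)) mod int p) mod int p"
    using int_vadd[OF i] int_vsub[OF p i] by simp
  then show "int (vadd p n z (vsub p n y z) i) mod int p = int (y i) mod int p"
    by (simp add: mod_simps)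
qed

definition lin_span :: "nat \<Rightarrow> nat \<Rightarrow> (nat \<Rightarrow> nat \<Rightarrow> nat) \<Rightarrow> nat \<Rightarrow> (nat \<Rightarrow> nat) set" where
  "lin_span p n vs m = (\<lambda>t. lincomb p n t vs m) ` Fvec p m"

lemma lin_span_subset_Fvec: "0 < p \<Longrightarrow> lin_span p n vs m \<subseteq> Fvec p n"
  by (auto simp: lin_span_def lincomb_in_Fvec)

lemma finite_lin_span: "finite (lin_span p n vs m)"
  by (simp add: lin_span_def finite_Fvec)

lemma card_lin_span_le: "card (lin_span p n vs m) \<le> p ^ m"
  unfolding lin_span_def by (metis card_Fvec card_image_le finite_Fvec)

lemma lin_span_zero_gens:
  assumes "0 < p" shows "lin_span p n vs 0 = {\<lambda>_. 0}"
proof -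
  have "lincomb p n t vs 0 = (\<lambda>_. 0)" for t by (simp add: lincomb_def fun_eq_iff)
  then show ?thesis using zero_in_Fvec[OF assms] by (auto simp: lin_span_def)
qed

lemma lin_spanI:
  fixes c :: "nat \<Rightarrow> int"
  assumes p: "0 < p" and v: "v \<in> Fvec p n"
    and h: "\<forall>i<n. int (v i) mod int p = (\<Sum>j<m. c j * int (vs j i)) mod int p"
  shows "v \<in> lin_span p n vs m"
proof -
  define t where "t = (\<lambda>j. if j < m then nat (c j mod int p) else 0)"
  have t: "t \<in> Fvec p m" using p by (auto simp: t_def Fvec_def nat_less_iff)
  have "v = lincomb p n t vs m"
  proof (rule Fvec_eqI[OF v lincomb_in_Fvec[OF p]], intro allI impI)
    fix i assume i: "i < n"
    have "(\<Sum>j<m. int (t j) * int (vs j i)) mod int p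
        = (\<Sum>j<m. (c j mod int p) * int (vs j i) mod int p) mod int p"
      using p by (simp add: t_def mod_sum_eq)
    also have "\<dots> = (\<Sum>j<m. c j * int (vs j i)) mod int p"
      by (simp add: mod_mult_left_eq mod_sum_eq)
    finally show "int (v i) mod int p = int (lincomb p n t vs m i) mod int p"
      using h i by (simp add: int_lincomb)
  qed
  then show ?thesis using t by (auto simp: lin_span_def)
qed

lemma lin_spanE:
  assumes "u \<in> lin_span p n vs m"
  obtains t where "t \<in> Fvec p m"
    "\<And>i. i < n \<Longrightarrow> int (u i) = (\<Sum>j<m. int (t j) * int (vs j i)) mod int p"
  using assms by (auto simp: lin_span_def int_lincomb)

lemma lin_span_lin_comb2:
  fixes a b :: int
  assumes p: "0 < p" and v: "v \<in> Fvec p n"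
    and u1: "u1 \<in> lin_span p n vs m" and u2: "u2 \<in> lin_span p n vs m"
    and h: "\<forall>i<n. int (v i) mod int p = (a * int (u1 i) + b * int (u2 i)) mod int p"
  shows "v \<in> lin_span p n vs m"
proof -
  obtain t1 where t1: "\<And>i. i < n \<Longrightarrow> int (u1 i) = (\<Sum>j<m. int (t1 j) * int (vs j i)) mod int p"
    using lin_spanE[OF u1] by blast
  obtain t2 where t2: "\<And>i. i < n \<Longrightarrow> int (u2 i) = (\<Sum>j<m. int (t2 j) * int (vs j i)) mod int p"
    using lin_spanE[OF u2] by blast
  show ?thesis
  proof (rule lin_spanI[OF p v, where c = "\<lambda>j. a * int (t1 j) + b * int (t2 j)"], intro allI impI)
    fix i assume i: "i < n"
    have "(a * int (u1 i) + b * int (u2 i)) mod int p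
        = (a * (\<Sum>j<m. int (t1 j) * int (vs j i)) + b * (\<Sum>j<m. int (t2 j) * int (vs j i))) mod int p"
      unfolding t1[OF i] t2[OF i] by (rule mod_add_cong[OF mod_mult_right_eq mod_mult_right_eq])
    also have "\<dots> = (\<Sum>j<m. (a * int (t1 j) + b * int (t2 j)) * int (vs j i)) mod int p"
      by (simp add: sum_distrib_left sum.distrib algebra_simps)
    finally show "int (v i) mod int p
        = (\<Sum>j<m. (a * int (t1 j) + b * int (t2 j)) * int (vs j i)) mod int p"
      using h i by simp
  qed
qed

lemma zero_in_lin_span: "0 < p \<Longrightarrow> (\<lambda>_. 0) \<in> lin_span p n vs m"
  by (rule lin_spanI[where c = "\<lambda>_. 0"]) (auto simp: zero_in_Fvec)

lemma gen_in_lin_span: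
  assumes "0 < p" "l < m" "vs l \<in> Fvec p n"
  shows "vs l \<in> lin_span p n vs m"
proof (rule lin_spanI[OF assms(1,3), where c = "\<lambda>j. if j = l then 1 else 0"], intro allI impI)
  fix i
  have "(\<Sum>j<m. (if j = l then 1 else 0) * int (vs j i)) = (\<Sum>j\<in>{l}. int (vs j i))"
    using \<open>l < m\<close> by (intro sum.mono_neutral_cong_right) auto
  then show "int (vs l i) mod int p = (\<Sum>j<m. (if j = l then 1 else 0) * int (vs j i)) mod int p"
    by simp
qed

lemma lin_span_subset_lin_span:
  assumes p: "0 < p" and ws: "\<forall>l<j. ws l \<in> lin_span p n vs m"
  shows "lin_span p n ws j \<subseteq> lin_span p n vs m"
proof
  fix x assume x: "x \<in> lin_span p n ws j"
  obtain t where t: "\<And>i. i < n \<Longrightarrow> int (x i) = (\<Sum>l<j. int (t l) * int (ws l i)) mod int p"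
    using lin_spanE[OF x] by blast
  obtain a where a: "\<And>l i. l < j \<Longrightarrow> i < n \<Longrightarrow>
      int (ws l i) = (\<Sum>q<m. int (a l q) * int (vs q i)) mod int p"
  proof -
    have "\<forall>l. \<exists>a. l < j \<longrightarrow> (\<forall>i<n. int (ws l i) = (\<Sum>q<m. int (a q) * int (vs q i)) mod int p)"
      using ws lin_spanE by metis
    then show ?thesis using that by metis
  qed
  have "x \<in> Fvec p n" using lin_span_subset_Fvec[OF p] x by blast
  then show "x \<in> lin_span p n vs m"
  proof (rule lin_spanI[OF p, where c = "\<lambda>q. \<Sum>l<j. int (t l) * int (a l q)"], intro allI impI)
    fix i assume i: "i < n"
    have "int (x i) mod int p
        = (\<Sum>l<j. int (t l) * ((\<Sum>q<m. int (a l q) * int (vs q i)) mod int p) mod int p) mod int p"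
      using a i by (simp add: t mod_sum_eq)
    also have "\<dots> = (\<Sum>l<j. int (t l) * (\<Sum>q<m. int (a l q) * int (vs q i))) mod int p"
      by (simp add: mod_mult_right_eq mod_sum_eq)
    also have "(\<Sum>l<j. int (t l) * (\<Sum>q<m. int (a l q) * int (vs q i)))
        = (\<Sum>q<m. (\<Sum>l<j. int (t l) * int (a l q)) * int (vs q i))"
      by (simp add: sum_distrib_left sum_distrib_right sum.swap[of _ "{..<j}"] mult.assoc)
    finally show "int (x i) mod int p
        = (\<Sum>q<m. (\<Sum>l<j. int (t l) * int (a l q)) * int (vs q i)) mod int p" .
  qed
qed

lemma flat_point_diff_in_lin_span:
  assumes p: "0 < p"
    and A: "A = {vadd p n x (lincomb p n t vs m) | t. t \<in> Fvec p m}"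
    and y0: "y0 \<in> A" and y: "y \<in> A"
  shows "\<exists>w \<in> lin_span p n vs m. y = vadd p n y0 w"
proof -
  obtain t0 where t0: "t0 \<in> Fvec p m" "y0 = vadd p n x (lincomb p n t0 vs m)" using y0 A by blast
  obtain t where t: "t \<in> Fvec p m" "y = vadd p n x (lincomb p n t vs m)" using y A by blast
  have u0: "lincomb p n t0 vs m \<in> lin_span p n vs m" using t0 by (auto simp: lin_span_def)
  have u: "lincomb p n t vs m \<in> lin_span p n vs m" using t by (auto simp: lin_span_def)
  have "vsub p n y y0 \<in> lin_span p n vs m"
  proof (rule lin_span_lin_comb2[OF p vsub_in_Fvec[OF p] u u0, where a = 1 and b = "-1"],
      intro allI impI)
    fix i assume i: "i < n"
    have "int (vsub p n y y0 i) mod int p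
        = ((int (x i) + int (lincomb p n t vs m i)) mod int p
           - (int (x i) + int (lincomb p n t0 vs m i)) mod int p) mod int p"
      using int_vsub[OF p i] t(2) t0(2) int_vadd[OF i] by simp
    then show "int (vsub p n y y0 i) mod int p
        = (1 * int (lincomb p n t vs m i) + - 1 * int (lincomb p n t0 vs m i)) mod int p"
      by (simp add: mod_diff_eq)
  qed
  moreover have "y = vadd p n y0 (vsub p n y y0)"
    using vadd_vsub[OF p] t(2) vadd_in_Fvec[OF p] by simp
  ultimately show ?thesis by blast
qed

definition vaxpy :: "nat \<Rightarrow> nat \<Rightarrow> nat \<Rightarrow> (nat \<Rightarrow> nat) \<Rightarrow> (nat \<Rightarrow> nat) \<Rightarrow> (nat \<Rightarrow> nat)" where
  "vaxpy p n c w u = (\<lambda>i. if i < n then (c * w i + u i) mod p else 0)"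

lemma vaxpy_in_Fvec: "0 < p \<Longrightarrow> vaxpy p n c w u \<in> Fvec p n"
  by (auto simp: vaxpy_def Fvec_def)

lemma int_vaxpy: "i < n \<Longrightarrow> int (vaxpy p n c w u i) = (int c * int (w i) + int (u i)) mod int p"
  by (simp add: vaxpy_def zmod_int)

lemma vaxpy_in_lin_span_extend:
  assumes p: "0 < p" and u: "u \<in> lin_span p n ws j"
  shows "vaxpy p n c w u \<in> lin_span p n (ws(j := w)) (Suc j)"
proof -
  obtain t where t: "\<And>i. i < n \<Longrightarrow> int (u i) = (\<Sum>l<j. int (t l) * int (ws l i)) mod int p"
    using lin_spanE[OF u] by blast
  show ?thesis
  proof (rule lin_spanI[OF p vaxpy_in_Fvec[OF p], where c = "\<lambda>l. if l = j then int c else int (t l)"],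
      intro allI impI)
    fix i assume i: "i < n"
    have "(\<Sum>l<Suc j. (if l = j then int c else int (t l)) * int ((ws(j := w)) l i))
        = (\<Sum>l<j. int (t l) * int (ws l i)) + int c * int (w i)"
      by (simp add: sum.lessThan_Suc)
    then show "int (vaxpy p n c w u i) mod int p
        = (\<Sum>l<Suc j. (if l = j then int c else int (t l)) * int ((ws(j := w)) l i)) mod int p"
      using t[OF i] int_vaxpy[OF i] by (simp add: mod_simps add.commute)
  qed
qed

lemma in_lin_span_if_scaled_in:
  fixes \<delta> :: int
  assumes p: "prime p" and \<delta>: "\<not> int p dvd \<delta>" and w: "w \<in> Fvec p n"
    and u: "u \<in> lin_span p n ws j" and u': "u' \<in> lin_span p n ws j"
    and h: "\<forall>i<n. [\<delta> * int (w i) = int (u' i) - int (u i)] (mod int p)"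
  shows "w \<in> lin_span p n ws j"
proof -
  have "coprime \<delta> (int p)"
    using p \<delta> by (metis coprime_commute prime_imp_coprime prime_nat_int_transfer)
  then obtain e where e: "[\<delta> * e = 1] (mod int p)" using cong_solve_coprime_int by blast
  show ?thesis
  proof (rule lin_span_lin_comb2[OF prime_gt_0_nat[OF p] w u' u, where a = e and b = "-e"],
      intro allI impI)
    fix i assume i: "i < n"
    have "[e * (\<delta> * int (w i)) = e * (int (u' i) - int (u i))] (mod int p)"
      using h i by (intro cong_mult[OF cong_refl]) simp
    moreover have "[e * (\<delta> * int (w i)) = int (w i)] (mod int p)"
      using cong_mult[OF e cong_refl[of "int (w i)"]] by (simp add: algebra_simps)
    ultimately have "[int (w i) = e * int (u' i) + - e * int (u i)] (mod int p)"
      by (metis cong_sym cong_trans right_diff_distrib' minus_mult_left diff_conv_add_uminus)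
    then show "int (w i) mod int p = (e * int (u' i) + - e * int (u i)) mod int p"
      unfolding cong_def .
  qed
qed

lemma vaxpy_inj_on:
  assumes p: "prime p" and w: "w \<in> Fvec p n" and wn: "w \<notin> lin_span p n ws j"
  shows "inj_on (\<lambda>(c, u). vaxpy p n c w u) ({..<p} \<times> lin_span p n ws j)"
proof (rule inj_onI, clarify)
  have p0: "0 < p" using p prime_gt_0_nat by blast
  fix c u c' u' assume c: "c < p" and u: "u \<in> lin_span p n ws j"
    and c': "c' < p" and u': "u' \<in> lin_span p n ws j"
    and e: "vaxpy p n c w u = vaxpy p n c' w u'"
  have ce: "[int c * int (w i) + int (u i) = int c' * int (w i) + int (u' i)] (mod int p)"
    if "i < n" for i using int_vaxpy[OF that, of p c w u] int_vaxpy[OF that, of p c' w u'] e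
    by (simp add: cong_def)
  have "c = c'"
  proof (rule ccontr)
    assume "c \<noteq> c'"
    then have "0 < \<bar>int c - int c'\<bar>" "\<bar>int c - int c'\<bar> < int p" using c c' by auto
    then have "\<not> int p dvd (int c - int c')" using zdvd_not_zless by fastforce
    moreover have "\<forall>i<n. [(int c - int c') * int (w i) = int (u' i) - int (u i)] (mod int p)"
      using ce unfolding cong_iff_dvd_diff by (simp add: algebra_simps)
    ultimately show False using in_lin_span_if_scaled_in[OF p _ w u u'] wn by blast
  qed
  moreover have "u \<in> Fvec p n" "u' \<in> Fvec p n" using u u' lin_span_subset_Fvec[OF p0] by blast+
  then have "u = u'"
  proof (rule Fvec_eqI, intro allI impI)
    fix i assume "i < n"
    then have "[int c * int (w i) + int (u i) = int c * int (w i) + int (u' i)] (mod int p)"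
      using ce \<open>c = c'\<close> by simp
    then show "int (u i) mod int p = int (u' i) mod int p"
      using cong_add_lcancel unfolding cong_def by blast
  qed
  ultimately show "c = c' \<and> u = u'" by simp
qed

lemma card_lin_span_extend:
  assumes p: "prime p" and w: "w \<in> Fvec p n" and wn: "w \<notin> lin_span p n ws j"
  shows "p * card (lin_span p n ws j) \<le> card (lin_span p n (ws(j := w)) (Suc j))"
proof -
  have p0: "0 < p" using p prime_gt_0_nat by blast
  let ?f = "\<lambda>(c, u). vaxpy p n c w u"
  have "p * card (lin_span p n ws j) = card (?f ` ({..<p} \<times> lin_span p n ws j))"
    using card_image[OF vaxpy_inj_on[OF assms]] by (simp add: card_cartesian_product)
  also have "\<dots> \<le> card (lin_span p n (ws(j := w)) (Suc j))"
    by (intro card_mono finite_lin_span) (auto simp: vaxpy_in_lin_span_extend[OF p0])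
  finally show ?thesis .
qed

text \<open>The points \<open>y0\<close> and \<open>y0 + ws l\<close> (\<open>l < j\<close>) lie in \<open>T\<close>; the cardinality condition says
  that the \<open>ws l\<close> are linearly independent.\<close>

definition point_frame ::
    "nat \<Rightarrow> nat \<Rightarrow> (nat \<Rightarrow> nat) set \<Rightarrow> (nat \<Rightarrow> nat) \<Rightarrow> (nat \<Rightarrow> nat \<Rightarrow> nat) \<Rightarrow> nat \<Rightarrow> bool" where
  "point_frame p n T y0 ws j \<longleftrightarrow>
     (\<forall>l<j. ws l \<in> Fvec p n \<and> ws l \<noteq> (\<lambda>_. 0) \<and> vadd p n y0 (ws l) \<in> T) \<and>
     (\<forall>l\<ge>j. ws l = (\<lambda>_. 0)) \<and> inj_on ws {..<j} \<and> p ^ j \<le> card (lin_span p n ws j)"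

lemma point_frame_empty: "0 < p \<Longrightarrow> point_frame p n T y0 (\<lambda>_ _. 0) 0"
  by (simp add: point_frame_def lin_span_zero_gens)

lemma point_frame_extend:
  assumes p: "prime p" and frame: "point_frame p n T y0 ws j"
    and w: "w \<in> Fvec p n" and wn: "w \<notin> lin_span p n ws j" and wT: "vadd p n y0 w \<in> T"
  shows "point_frame p n T y0 (ws(j := w)) (Suc j)"
proof -
  have p0: "0 < p" using p prime_gt_0_nat by blast
  have w0: "w \<noteq> (\<lambda>_. 0)" using wn zero_in_lin_span[OF p0] by metis
  have "w \<noteq> ws l" if "l < j" for l
    using wn gen_in_lin_span[OF p0 that] frame that by (auto simp: point_frame_def)
  moreover have "inj_on (ws(j := w)) {..<j}" using frame by (simp add: point_frame_def inj_on_def)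
  ultimately have inj: "inj_on (ws(j := w)) {..<Suc j}" by (auto simp: lessThan_Suc)
  have "p * p ^ j \<le> card (lin_span p n (ws(j := w)) (Suc j))"
    using card_lin_span_extend[OF p w wn] frame
    by (meson mult_le_mono2 order_trans point_frame_def)
  then show ?thesis
    using frame w w0 wT inj by (auto simp: point_frame_def less_Suc_eq)
qed

lemma point_frame_length_le:
  assumes p: "prime p"
    and A: "A = {vadd p n x (lincomb p n t vs m) | t. t \<in> Fvec p m}"
    and T: "T \<subseteq> A" and y0: "y0 \<in> T" and frame: "point_frame p n T y0 ws j"
  shows "j \<le> m"
proof -
  have p0: "0 < p" using p prime_gt_0_nat by blast
  have "ws l \<in> lin_span p n vs m" if l: "l < j" for l
  proof -
    have "vadd p n y0 (ws l) \<in> A" using frame l T by (auto simp: point_frame_def)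
    then obtain w where w: "w \<in> lin_span p n vs m" and e: "vadd p n y0 (ws l) = vadd p n y0 w"
      using flat_point_diff_in_lin_span[OF p0 A] y0 T by blast
    have "ws l = w"
      using vadd_left_cancel[OF _ _ e] w lin_span_subset_Fvec[OF p0] frame l
      by (auto simp: point_frame_def)
    then show ?thesis using w by simp
  qed
  then have "lin_span p n ws j \<subseteq> lin_span p n vs m"
    by (intro lin_span_subset_lin_span[OF p0]) blast
  then have "p ^ j \<le> p ^ m"
    using frame card_mono[OF finite_lin_span] card_lin_span_le
    by (meson order_trans point_frame_def)
  then show ?thesis using p prime_gt_1_nat power_le_imp_le_exp by blast
qed

text \<open>A point frame of maximal length covers \<open>T\<close>: any point outside its flat would extend it.\<close>

lemma subset_flat_covered_by_point_frame:
  assumes p: "prime p"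
    and A: "A = {vadd p n x (lincomb p n t vs m) | t. t \<in> Fvec p m}"
    and T: "T \<subseteq> A" and y0: "y0 \<in> T"
  shows "\<exists>j \<le> m. \<exists>ws. point_frame p n T y0 ws j \<and> T \<subseteq> vadd p n y0 ` lin_span p n ws j"
proof -
  have p0: "0 < p" using p prime_gt_0_nat by blast
  obtain j where "\<exists>ws. point_frame p n T y0 ws j"
    and maximal: "\<And>j'. \<exists>ws. point_frame p n T y0 ws j' \<Longrightarrow> j' \<le> j"
    using Nat.ex_has_greatest_nat[where P = "\<lambda>j. \<exists>ws. point_frame p n T y0 ws j" and b = m]
      point_frame_empty[OF p0] point_frame_length_le[OF p A T y0] by blast
  then obtain ws where frame: "point_frame p n T y0 ws j" by blast
  have "T \<subseteq> vadd p n y0 ` lin_span p n ws j"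
  proof
    fix y assume "y \<in> T"
    then obtain w where w: "w \<in> lin_span p n vs m" and y: "y = vadd p n y0 w"
      using flat_point_diff_in_lin_span[OF p0 A] T y0 by blast
    show "y \<in> vadd p n y0 ` lin_span p n ws j"
    proof (rule ccontr)
      assume "y \<notin> vadd p n y0 ` lin_span p n ws j"
      then have "point_frame p n T y0 (ws(j := w)) (Suc j)"
        using point_frame_extend[OF p frame] w lin_span_subset_Fvec[OF p0] \<open>y \<in> T\<close> y by blast
      then show False using maximal by fastforce
    qed
  qed
  then show ?thesis using frame point_frame_length_le[OF p A T y0 frame] by blast
qed

lemma card_supersets_le:
  assumes F: "finite F" and Y: "finite Y" "card Y = a"
  shows "card {T. card T = r \<and> Y \<subseteq> T \<and> T \<subseteq> F} \<le> card F ^ (r - a)"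
proof -
  define X where "X = {T. card T = r \<and> Y \<subseteq> T \<and> T \<subseteq> F}"
  have "inj_on (\<lambda>T. T - Y) X"
    by (rule inj_onI) (simp add: X_def, metis Diff_partition)
  then have "card X = card ((\<lambda>T. T - Y) ` X)" by (simp add: card_image)
  also have "\<dots> \<le> card {Z. Z \<subseteq> F \<and> card Z = r - a}"
  proof (rule card_mono)
    show "finite {Z. Z \<subseteq> F \<and> card Z = r - a}" using F by simp
    show "(\<lambda>T. T - Y) ` X \<subseteq> {Z. Z \<subseteq> F \<and> card Z = r - a}"
      using Y by (auto simp: X_def card_Diff_subset)
  qed
  also have "\<dots> = card F choose (r - a)" using n_subsets[OF F] by simp
  also have "\<dots> \<le> card F ^ (r - a)"
    by (cases "r - a \<le> card F") (auto simp: binomial_le_pow binomial_eq_0)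
  finally show ?thesis unfolding X_def .
qed

definition frame_points :: "nat \<Rightarrow> nat \<Rightarrow> (nat \<Rightarrow> nat) \<Rightarrow> (nat \<Rightarrow> nat \<Rightarrow> nat) \<Rightarrow> nat \<Rightarrow> (nat \<Rightarrow> nat) set" where
  "frame_points p n y0 ws j = insert y0 ((\<lambda>l. vadd p n y0 (ws l)) ` {..<j})"

lemma card_frame_points:
  assumes p: "0 < p" and y0: "y0 \<in> Fvec p n" and frame: "point_frame p n T y0 ws j"
  shows "card (frame_points p n y0 ws j) = Suc j"
proof -
  have ws: "ws l \<in> Fvec p n" "ws l \<noteq> (\<lambda>_. 0)" if "l < j" for l
    using frame that by (auto simp: point_frame_def)
  have "y0 \<noteq> vadd p n y0 (ws l)" if "l < j" for l
  proof
    assume "y0 = vadd p n y0 (ws l)"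
    then have "vadd p n y0 (\<lambda>_. 0) = vadd p n y0 (ws l)" using vadd_zero_right[OF y0] by simp
    then have "(\<lambda>_. 0) = ws l" by (rule vadd_left_cancel[OF zero_in_Fvec[OF p] ws(1)[OF that]])
    with ws(2)[OF that] show False by simp
  qed
  moreover have "inj_on (\<lambda>l. vadd p n y0 (ws l)) {..<j}"
  proof (rule inj_onI)
    fix a b assume "a \<in> {..<j}" "b \<in> {..<j}" and "vadd p n y0 (ws a) = vadd p n y0 (ws b)"
    then have "ws a = ws b" using vadd_left_cancel ws(1) by blast
    then show "a = b" using frame \<open>a \<in> {..<j}\<close> \<open>b \<in> {..<j}\<close>
      by (auto simp: point_frame_def inj_on_def)
  qed
  ultimately show ?thesis
    unfolding frame_points_def by (subst card_insert_disjoint) (auto simp: card_image)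
qed

definition degenerate_sets :: "nat \<Rightarrow> nat \<Rightarrow> nat \<Rightarrow> nat \<Rightarrow> (nat \<Rightarrow> nat) set set" where
  "degenerate_sets p n m r =
     {T. T \<subseteq> Fvec p n \<and> card T = r \<and> (\<exists>A. affine_subspace p n m A \<and> T \<subseteq> A)}"

lemma degenerate_set_in_frame_flat:
  assumes p: "prime p" and "0 < r" and T: "T \<in> degenerate_sets p n m r"
  obtains j y0 ws where "j \<le> m" "y0 \<in> Fvec p n" "\<forall>l<j. ws l \<in> Fvec p n" "\<forall>l\<ge>j. ws l = (\<lambda>_. 0)"
    "card (frame_points p n y0 ws j) = Suc j" "frame_points p n y0 ws j \<subseteq> T"
    "T \<subseteq> vadd p n y0 ` lin_span p n ws j"
proof -
  have p0: "0 < p" using p prime_gt_0_nat by blast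
  obtain A where TF: "T \<subseteq> Fvec p n" and "card T = r" and aff: "affine_subspace p n m A"
    and TA: "T \<subseteq> A"
    using T by (auto simp: degenerate_sets_def)
  then obtain y0 where y0: "y0 \<in> T" using \<open>0 < r\<close> by fastforce
  obtain x vs where A: "A = {vadd p n x (lincomb p n t vs m) | t. t \<in> Fvec p m}"
    using aff unfolding affine_subspace_def by blast
  obtain j ws where "j \<le> m" and frame: "point_frame p n T y0 ws j"
    and "T \<subseteq> vadd p n y0 ` lin_span p n ws j"
    using subset_flat_covered_by_point_frame[OF p A TA y0] by blast
  moreover have "frame_points p n y0 ws j \<subseteq> T"
    using frame y0 by (auto simp: frame_points_def point_frame_def)
  moreover have "y0 \<in> Fvec p n" using y0 TF by blast
  ultimately show ?thesis
    using that[of j y0 ws] card_frame_points[OF p0 _ frame] frame by (auto simp: point_frame_def)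
qed

lemma card_frame_flat_sets_le:
  assumes "card (frame_points p n y0 ws j) = Suc j"
  shows "finite {T. card T = r \<and> frame_points p n y0 ws j \<subseteq> T \<and> T \<subseteq> vadd p n y0 ` lin_span p n ws j}"
    and "card {T. card T = r \<and> frame_points p n y0 ws j \<subseteq> T \<and> T \<subseteq> vadd p n y0 ` lin_span p n ws j}
      \<le> (p ^ j) ^ (r - Suc j)"
proof -
  let ?F = "vadd p n y0 ` lin_span p n ws j"
  have "finite ?F" by (simp add: finite_lin_span)
  then show "finite {T. card T = r \<and> frame_points p n y0 ws j \<subseteq> T \<and> T \<subseteq> ?F}" by simp
  have "finite (frame_points p n y0 ws j)" by (simp add: frame_points_def)
  then have "card {T. card T = r \<and> frame_points p n y0 ws j \<subseteq> T \<and> T \<subseteq> ?F} \<le> card ?F ^ (r - Suc j)"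
    using card_supersets_le[OF \<open>finite ?F\<close>] assms by simp
  also have "\<dots> \<le> (p ^ j) ^ (r - Suc j)"
    by (intro power_mono order_trans[OF card_image_le[OF finite_lin_span] card_lin_span_le]) simp
  finally show "card {T. card T = r \<and> frame_points p n y0 ws j \<subseteq> T \<and> T \<subseteq> ?F}
      \<le> (p ^ j) ^ (r - Suc j)" .
qed

text \<open>Count the degenerate sets through their frames: \<open>p\<^sup>n\<close> choices of \<open>y0\<close>, at most \<open>(p\<^sup>n)\<^sup>j\<close>
  of \<open>ws\<close>, and at most \<open>(p\<^sup>j)\<^sup>r\<^sup>-\<^sup>j\<^sup>-\<^sup>1\<close> ways to add the remaining points inside the \<open>j\<close>-flat.\<close>

lemma card_degenerate_sets_le_sum:
  assumes p: "prime p" and "0 < r"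
  shows "card (degenerate_sets p n m r) \<le> (\<Sum>j\<le>m. p ^ n * (p ^ n) ^ j * (p ^ j) ^ (r - Suc j))"
proof -
  define W where "W j = {ws. (\<forall>l<j. ws l \<in> Fvec p n) \<and> (\<forall>l\<ge>j. ws l = (\<lambda>_. 0))}" for j :: nat
  define G where "G j = {(y0, ws). y0 \<in> Fvec p n \<and> ws \<in> W j \<and>
    card (frame_points p n y0 ws j) = Suc j}" for j
  define Fam where "Fam j = (\<lambda>(y0, ws). {T. card T = r \<and> frame_points p n y0 ws j \<subseteq> T \<and>
    T \<subseteq> vadd p n y0 ` lin_span p n ws j})" for j :: nat
  have W: "finite (W j)" "card (W j) = (p ^ n) ^ j" for j
    using card_funs_fixed_outside[OF finite_Fvec, of j p n "\<lambda>_. 0"] by (simp_all add: W_def card_Fvec)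
  have G: "finite (G j)" "card (G j) \<le> p ^ n * (p ^ n) ^ j" for j
  proof -
    have "G j \<subseteq> Fvec p n \<times> W j" by (auto simp: G_def)
    then show "finite (G j)" "card (G j) \<le> p ^ n * (p ^ n) ^ j"
      using card_mono[of "Fvec p n \<times> W j" "G j"] finite_subset[of "G j" "Fvec p n \<times> W j"] W
      by (simp_all add: finite_Fvec card_Fvec card_cartesian_product)
  qed
  have Fam: "finite (Fam j z)" "card (Fam j z) \<le> (p ^ j) ^ (r - Suc j)" if "z \<in> G j" for j z
    using that card_frame_flat_sets_le by (auto simp: G_def Fam_def)
  have "degenerate_sets p n m r \<subseteq> (\<Union>j\<le>m. \<Union>z\<in>G j. Fam j z)"
  proof
    fix T assume T: "T \<in> degenerate_sets p n m r"
    obtain j y0 ws where "j \<le> m" "y0 \<in> Fvec p n" "\<forall>l<j. ws l \<in> Fvec p n"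
      "\<forall>l\<ge>j. ws l = (\<lambda>_. 0)" "card (frame_points p n y0 ws j) = Suc j"
      "frame_points p n y0 ws j \<subseteq> T" "T \<subseteq> vadd p n y0 ` lin_span p n ws j"
      by (rule degenerate_set_in_frame_flat[OF p \<open>0 < r\<close> T])
    moreover have "card T = r" using T by (simp add: degenerate_sets_def)
    ultimately have "j \<le> m" "(y0, ws) \<in> G j" "T \<in> Fam j (y0, ws)"
      by (simp_all add: G_def W_def Fam_def)
    then show "T \<in> (\<Union>j\<le>m. \<Union>z\<in>G j. Fam j z)" by blast
  qed
  then have "card (degenerate_sets p n m r) \<le> card (\<Union>j\<le>m. \<Union>z\<in>G j. Fam j z)"
    by (intro card_mono finite_UN_I finite_atMost G Fam)
  also have "\<dots> \<le> (\<Sum>j\<le>m. card (\<Union>z\<in>G j. Fam j z))" by (rule card_UN_le) simp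
  also have "\<dots> \<le> (\<Sum>j\<le>m. \<Sum>z\<in>G j. card (Fam j z))"
    by (rule sum_mono, rule card_UN_le, rule G)
  also have "\<dots> \<le> (\<Sum>j\<le>m. \<Sum>z\<in>G j. (p ^ j) ^ (r - Suc j))"
    by (intro sum_mono Fam(2))
  also have "\<dots> \<le> (\<Sum>j\<le>m. p ^ n * (p ^ n) ^ j * (p ^ j) ^ (r - Suc j))"
    by (intro sum_mono) (simp add: mult_le_mono1 G(2))
  finally show ?thesis .
qed

lemma frame_count_exponent_mono:
  assumes "j \<le> m" "2 * m + 1 \<le> r"
  shows "n + n * j + j * (r - Suc j) \<le> n + n * m + m * (r - Suc m)"
proof -
  define a where "a = r - Suc m"
  define d where "d = m - j"
  have m: "m = j + d" and rj: "r - Suc j = a + d" using assms by (auto simp: a_def d_def)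
  have "j \<le> a" using assms by (auto simp: a_def)
  have "j * (r - Suc j) = j * a + j * d" by (simp add: rj algebra_simps)
  also have "\<dots> \<le> j * a + d * a" using \<open>j \<le> a\<close> by (simp add: mult.commute)
  also have "\<dots> = m * (r - Suc m)" by (simp add: m a_def add_mult_distrib)
  finally show ?thesis using assms(1) by (simp add: add_mono)
qed

lemma card_degenerate_sets_le:
  assumes p: "prime p" and mr: "2 * m + 1 \<le> r"
  shows "card (degenerate_sets p n m r) \<le> Suc m * p ^ (n + n * m + m * (r - Suc m))"
proof -
  have "card (degenerate_sets p n m r) \<le> (\<Sum>j\<le>m. p ^ n * (p ^ n) ^ j * (p ^ j) ^ (r - Suc j))"
    using mr by (intro card_degenerate_sets_le_sum[OF p]) simp
  also have "\<dots> = (\<Sum>j\<le>m. p ^ (n + n * j + j * (r - Suc j)))"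
    by (simp add: power_add power_mult)
  also have "\<dots> \<le> (\<Sum>j\<le>m. p ^ (n + n * m + m * (r - Suc m)))"
    using mr p prime_ge_1_nat
    by (intro sum_mono power_increasing frame_count_exponent_mono) auto
  finally show ?thesis by simp
qed

text \<open>Deletion argument: each \<open>T \<in> B\<close> lies in \<open>C(N-r, s-r)\<close> of the \<open>C(N, s)\<close> subsets of size \<open>s\<close>,
  and \<open>C(N, s) C(s, r) = C(N, r) C(N-r, s-r)\<close>.\<close>

lemma exists_subset_avoiding:
  assumes U: "finite U" "card U = N" and sN: "s \<le> N"
    and B: "B \<subseteq> {T. T \<subseteq> U \<and> card T = r}"
    and lt: "card B * (s choose r) < N choose r"
  shows "\<exists>S \<subseteq> U. card S = s \<and> (\<forall>T\<in>B. \<not> T \<subseteq> S)"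
proof (cases "r \<le> s")
  case False
  obtain S where "S \<subseteq> U" "card S = s" using obtain_subset_with_card_n sN U by metis
  moreover have "\<not> T \<subseteq> S" if "T \<in> B" for T
    using that B False card_mono[OF finite_subset[OF \<open>S \<subseteq> U\<close> U(1)]] \<open>card S = s\<close> by force
  ultimately show ?thesis by blast
next
  case rs: True
  define Ss where "Ss = {S. S \<subseteq> U \<and> card S = s}"
  have "B \<subseteq> Pow U" using B by blast
  then have "finite B" using U(1) by (meson finite_Pow_iff finite_subset)
  have each: "card {S \<in> Ss. T \<subseteq> S} \<le> (N - r) choose (s - r)" if T: "T \<in> B" for T
  proof -
    have TU: "T \<subseteq> U" and cT: "card T = r" using T B by auto
    have Tfin: "finite T" using TU U(1) finite_subset by blast
    have "inj_on (\<lambda>S. S - T) {S \<in> Ss. T \<subseteq> S}"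
      by (rule inj_onI) (simp, metis Diff_partition)
    then have "card {S \<in> Ss. T \<subseteq> S} = card ((\<lambda>S. S - T) ` {S \<in> Ss. T \<subseteq> S})"
      by (simp add: card_image)
    also have "\<dots> \<le> card {Z. Z \<subseteq> U - T \<and> card Z = s - r}"
      using U(1) Tfin cT by (intro card_mono) (auto simp: Ss_def card_Diff_subset)
    also have "\<dots> = (N - r) choose (s - r)"
      using n_subsets[of "U - T"] U TU Tfin cT by (simp add: card_Diff_subset)
    finally show ?thesis .
  qed
  have "card (\<Union>T\<in>B. {S \<in> Ss. T \<subseteq> S}) \<le> (\<Sum>T\<in>B. card {S \<in> Ss. T \<subseteq> S})"
    by (rule card_UN_le[OF \<open>finite B\<close>])
  also have "\<dots> \<le> card B * ((N - r) choose (s - r))"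
    using sum_mono[OF each] by simp
  also have "\<dots> < N choose s"
  proof -
    have "(N choose s) * (s choose r) = (N choose r) * ((N - r) choose (s - r))"
      by (rule choose_mult[OF rs sN])
    moreover have "0 < (N - r) choose (s - r)" using rs sN by simp
    ultimately have "card B * ((N - r) choose (s - r)) * (s choose r) < (N choose s) * (s choose r)"
      using lt by (simp add: mult.commute mult.left_commute)
    then show ?thesis by simp
  qed
  also have "\<dots> = card Ss" using n_subsets[OF U(1), of s] U(2) by (simp add: Ss_def)
  finally have "(\<Union>T\<in>B. {S \<in> Ss. T \<subseteq> S}) \<noteq> Ss" by auto
  then obtain S where "S \<in> Ss" "S \<notin> (\<Union>T\<in>B. {S \<in> Ss. T \<subseteq> S})" by blast
  then show ?thesis by (auto simp: Ss_def)
qed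

lemma exponent_bound:
  fixes \<epsilon> :: real
  assumes "m < n" "m < r" "real ((m + 1) * (n - m + 1)) \<le> \<epsilon> * real r"
  shows "real (n + n * m + m * (r - Suc m)) + (real n - real m - \<epsilon>) * real r \<le> real (n * r) - 1"
proof -
  have "real (n - m) = real n - real m" "real (r - Suc m) = real r - real m - 1"
    using assms(1,2) by simp_all
  then have "real ((m + 1) * (n - m + 1)) = (real m + 1) * (real n - real m + 1)"
    and "real (n + n * m + m * (r - Suc m)) = real n + real n * real m + real m * (real r - real m - 1)"
    by (simp_all only: of_nat_mult of_nat_add of_nat_1)
  then show ?thesis using assms(3) by (simp add: algebra_simps)
qed

lemma mult_pow_div_less_choose:
  assumes big: "Suc m * r ^ r < p" and "0 < n" "0 < r"
  shows "real (Suc m) * (real p ^ (n * r) / real p) < real (p ^ n choose r)"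
proof -
  have "real (Suc m) * (real p ^ (n * r) / real p) < real p ^ (n * r) / real r ^ r"
  proof -
    have "real (Suc m) * real r ^ r < real p"
      using big by (metis of_nat_less_iff of_nat_mult of_nat_power)
    then have "real (Suc m) * real r ^ r * real p ^ (n * r) < real p * real p ^ (n * r)"
      using big by (intro mult_strict_right_mono) simp_all
    moreover have "0 < real r ^ r" using \<open>0 < r\<close> by simp
    ultimately show ?thesis using big by (simp add: field_simps)
  qed
  also have "\<dots> = (real (p ^ n) / real r) ^ r" by (simp add: power_divide power_mult)
  also have "\<dots> \<le> real (p ^ n choose r)"
  proof (rule binomial_ge_n_over_k_pow_k)
    have "r \<le> r ^ r" using \<open>0 < r\<close> by (simp add: self_le_power)
    also have "\<dots> < p" by (rule le_less_trans[OF _ big]) simp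
    also have "\<dots> \<le> p ^ n" using \<open>0 < n\<close> big by (simp add: self_le_power)
    finally show "r \<le> p ^ n" by simp
  qed
  finally show ?thesis .
qed

lemma card_degenerate_sets_mult_choose_less:
  fixes \<epsilon> :: real
  assumes p: "prime p" and mn: "m < n" and mr: "2 * m + 1 \<le> r"
    and eps: "real ((m + 1) * (n - m + 1)) \<le> \<epsilon> * real r"
    and pbig: "(m + 1) * r ^ r < p"
    and s: "real s \<le> real p powr (real n - real m - \<epsilon>)"
  shows "card (degenerate_sets p n m r) * (s choose r) < p ^ n choose r"
proof -
  define P where "P = real p"
  define E where "E = n + n * m + m * (r - Suc m)"
  have P: "1 < P" using p prime_gt_1_nat by (simp add: P_def)
  have exponent: "P ^ E * P powr ((real n - real m - \<epsilon>) * real r) \<le> P ^ (n * r) / P"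
  proof -
    have "P ^ E * P powr ((real n - real m - \<epsilon>) * real r)
        = P powr (real E + (real n - real m - \<epsilon>) * real r)"
      using P by (simp add: powr_add powr_realpow)
    also have "\<dots> \<le> P powr (real (n * r) - 1)"
      using exponent_bound[OF mn _ eps] mr P unfolding E_def by (intro powr_mono) simp_all
    also have "\<dots> = P ^ (n * r) / P" using P by (simp del: of_nat_mult add: powr_diff powr_realpow)
    finally show ?thesis .
  qed
  have "real (card (degenerate_sets p n m r)) \<le> real (Suc m * p ^ E)"
    using card_degenerate_sets_le[OF p mr] unfolding E_def by (simp only: of_nat_le_iff)
  then have "real (card (degenerate_sets p n m r)) \<le> real (Suc m) * P ^ E"
    by (simp add: P_def algebra_simps)
  moreover have "real (s choose r) \<le> P powr ((real n - real m - \<epsilon>) * real r)"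
  proof -
    have "real (s choose r) \<le> real s ^ r"
      by (cases "r \<le> s") (simp_all add: binomial_le_pow binomial_eq_0 flip: of_nat_power)
    also have "\<dots> \<le> (P powr (real n - real m - \<epsilon>)) ^ r"
      using s by (simp add: P_def power_mono)
    finally show ?thesis using P by (simp add: powr_power mult.commute)
  qed
  ultimately have "real (card (degenerate_sets p n m r) * (s choose r))
      \<le> real (Suc m) * (P ^ E * P powr ((real n - real m - \<epsilon>) * real r))"
    unfolding of_nat_mult mult.assoc[symmetric] using P by (intro mult_mono) auto
  also have "\<dots> \<le> real (Suc m) * (P ^ (n * r) / P)"
    using exponent by (rule mult_left_mono) simp
  also have "\<dots> < real (p ^ n choose r)"
    using pbig mn mr unfolding P_def by (intro mult_pow_div_less_choose) simp_all
  finally show ?thesis by (simp only: of_nat_less_iff)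
qed

lemma card_flat_inter_le:
  assumes "R \<subseteq> Fvec p n" "\<forall>T \<in> degenerate_sets p n m r. \<not> T \<subseteq> R"
    and A: "affine_subspace p n m A" and "0 < r"
  shows "card (A \<inter> R) \<le> r - 1"
proof (rule ccontr)
  assume "\<not> card (A \<inter> R) \<le> r - 1"
  then have "r \<le> card (A \<inter> R)" by simp
  then obtain T where T: "T \<subseteq> A \<inter> R" "card T = r" using obtain_subset_with_card_n by metis
  then have "T \<in> degenerate_sets p n m r" using A assms(1) by (auto simp: degenerate_sets_def)
  with assms(2) T show False by blast
qed

lemma exists_large_subset_meeting_flats_sparsely:
  fixes \<epsilon> :: real
  assumes p: "prime p" and mn: "m + 2 \<le> n" and \<epsilon>: "0 < \<epsilon>" "\<epsilon> < 1"
    and r: "real ((m + 1) * (n - m + 1)) \<le> \<epsilon> * real r"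
    and p_large: "(m + 1) * r ^ r < p"
  shows "\<exists>R \<subseteq> Fvec p n. real p powr (real n - real m - \<epsilon>) / 2 \<le> real (card R) \<and>
           (\<forall>A. affine_subspace p n m A \<longrightarrow> card (A \<inter> R) \<le> r - 1)"
proof -
  define x where "x = real p powr (real n - real m - \<epsilon>)"
  define s where "s = nat \<lceil>x / 2\<rceil>"
  have P: "2 \<le> real p" using p prime_ge_2_nat by simp
  have "real p powr 1 \<le> x" unfolding x_def using mn \<epsilon> P by (intro powr_mono) auto
  then have s: "x / 2 \<le> real s" "real s \<le> x" using P by (simp_all add: s_def) linarith
  have "x \<le> real p powr real n" unfolding x_def using \<epsilon> P by (intro powr_mono) auto
  then have "s \<le> p ^ n" using s(2) P by (simp add: powr_realpow flip: of_nat_power)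
  have "\<epsilon> * real r \<le> real r" using \<epsilon> by (simp add: mult_left_le_one_le)
  then have "(m + 1) * (n - m + 1) \<le> r" using r by (simp only: of_nat_le_iff)
  moreover have "(m + 1) * 3 \<le> (m + 1) * (n - m + 1)" using mn by (intro mult_le_mono2) simp
  ultimately have mr: "2 * m + 1 \<le> r" by simp
  have few: "card (degenerate_sets p n m r) * (s choose r) < p ^ n choose r"
    using mn mr r p_large s(2) unfolding x_def
    by (intro card_degenerate_sets_mult_choose_less[OF p]) simp_all
  have "degenerate_sets p n m r \<subseteq> {T. T \<subseteq> Fvec p n \<and> card T = r}"
    by (auto simp: degenerate_sets_def)
  from exists_subset_avoiding[OF finite_Fvec card_Fvec \<open>s \<le> p ^ n\<close> this few]
  obtain R where R: "R \<subseteq> Fvec p n" "card R = s"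
    and avoids: "\<forall>T \<in> degenerate_sets p n m r. \<not> T \<subseteq> R"
    by blast
  have "card (A \<inter> R) \<le> r - 1" if "affine_subspace p n m A" for A
    using card_flat_inter_le[OF R(1) avoids that] mr by simp
  then show ?thesis using R s(1) x_def by blast
qed

theorem lemma6:
  fixes d k :: nat and \<epsilon> :: real
  assumes "2 \<le> k" and "k + 2 \<le> d" and "0 < \<epsilon>" and "\<epsilon> < 1"
  defines "r \<equiv> nat \<lceil>real (k * (d - k + 1)) / \<epsilon>\<rceil>"
  shows "\<exists>p0::nat. 0 < p0 \<and>
    (\<forall>p::nat. prime p \<and> p0 \<le> p \<longrightarrow>
      (\<exists>R \<subseteq> Fvec p (d - 1).
         real (card R) \<ge> real p powr (real d - real k - \<epsilon>) / 2 \<and>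
         (\<forall>A. affine_subspace p (d - 1) (k - 1) A \<longrightarrow> card (A \<inter> R) \<le> r - 1)))"
proof (intro exI[of _ "k * r ^ r + 1"] conjI allI impI)
  fix p :: nat assume p: "prime p \<and> k * r ^ r + 1 \<le> p"
  have "real (k * (d - k + 1)) / \<epsilon> \<le> real r" unfolding r_def by linarith
  then have r: "real ((k - 1 + 1) * (d - 1 - (k - 1) + 1)) \<le> \<epsilon> * real r"
    using assms(1-3) by (simp add: pos_divide_le_eq mult.commute)
  have "(k - 1 + 1) * r ^ r < p" "k - 1 + 2 \<le> d - 1" using p assms(1,2) by auto
  then obtain R where "R \<subseteq> Fvec p (d - 1)"
    "real p powr (real (d - 1) - real (k - 1) - \<epsilon>) / 2 \<le> real (card R)"
    "\<forall>A. affine_subspace p (d - 1) (k - 1) A \<longrightarrow> card (A \<inter> R) \<le> r - 1"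
    using exists_large_subset_meeting_flats_sparsely[OF conjunct1[OF p] _ assms(3,4) r] by blast
  moreover have "real (d - 1) - real (k - 1) = real d - real k" using assms(1,2) by simp
  ultimately show "\<exists>R \<subseteq> Fvec p (d - 1).
      real (card R) \<ge> real p powr (real d - real k - \<epsilon>) / 2 \<and>
      (\<forall>A. affine_subspace p (d - 1) (k - 1) A \<longrightarrow> card (A \<inter> R) \<le> r - 1)"
    by auto
qed simp

end
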